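(* Let $X$, $Y$ be real Banach spaces, let $\Omega$ be a measure space, $Z:=L^2(\Omega)$, and let $e:Y\to Z$ be a linear continuous dense embedding. Let $f:X\to\mathbb{R}$ and $g:X\to Y$, and consider the problem $\min f(x)$ s.t. $g(x)\le 0$. Assume that $f$ and $x\mapsto\|g_+(x)\|_Z$ are weakly lower semicontinuous on $X$. Let $(x^k)$ be a sequence generated by the augmented Lagrangian algorithm described in the context, where in Step 2 the iterate $x^{k+1}$ is chosen such that there is a sequence $\varepsilon_k\downarrow 0$ with $L_{\rho_k}(x^{k+1},w^k)\le L_{\rho_k}(x,w^k)+\varepsilon_k$ for all $x\in X$ and all $k\in\mathbb{N}$. Let $\bar x$ be a weak limit point of $(x^k)$. Then: (a) $\bar x$ is a global minimizer of the function $x\mapsto\|g_+(x)\|_Z^2$ on $X$; (b) if $\bar x$ is feasible (i.e. $g(\bar x)\le 0$), then $\bar x$ is a (global) solution of $\min f(x)$ s.t. $g(x)\le 0$.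
   Context: The order on $Y$ is induced by $Z$: $y\le 0$ in $Y$ means $e(y)\le 0$ a.e. on $\Omega$. For $z\in Z$, $z_+:=\max\{z,0\}$, $z_-:=\max\{-z,0\}$ (pointwise); for $x\in X$, $g_+(x):=(e(g(x)))_+$, and $\min$ of elements of $Z$ is pointwise. $\langle\cdot,\cdot\rangle$ is the inner product of $Z$. The augmented Lagrangian is $L_\rho(x,\lambda):=f(x)+\frac{\rho}{2}\big\|\big(g(x)+\frac{\lambda}{\rho}\big)_+\big\|_Z^2$ for $x\in X$, $\lambda\in Z$, $\rho>0$ (with $g(x)$ viewed in $Z$ via $e$). Algorithm: (S.0) Choose $(x^0,\lambda^0)\in X\times Z$, $\rho_0>0$, $w^{\max}\in Z$ with $w^{\max}\ge 0$ a.e., $\gamma>1$, $\tau\in(0,1)$; set $k=0$. (S.2) Choose $w^k\in Z$ with $0\le w^k\le w^{\max}$ a.e. and compute an approximate minimizer $x^{k+1}$ of $x\mapsto L_{\rho_k}(x,w^k)$ over $X$. (S.3) Set $\lambda^{k+1}:=(w^k+\rho_k g(x^{k+1}))_+$. If $k=0$ or $\big\|\min\{-g(x^{k+1}),w^k/\rho_k\}\big\|_Z\le\tau\big\|\min\{-g(x^k),w^{k-1}/\rho_{k-1}\}\big\|_Z$, set $\rho_{k+1}:=\rho_k$; otherwise set $\rho_{k+1}:=\gamma\rho_k$. (S.4) Set $k\leftarrow k+1$ and go to (S.2). The algorithm is run without stopping, producing infinite sequences. *)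

theory Defs
  imports "HOL-Analysis.Analysis"
begin

text \<open>The Hilbert space Z = L^2(Omega) is represented by (representatives of) square
  integrable real functions on the measure space M; equality/order in Z is a.e.\<close>

definition L2 :: "'w measure \<Rightarrow> ('w \<Rightarrow> real) set" where
  "L2 M = {z. z \<in> borel_measurable M \<and> integrable M (\<lambda>\<omega>. (z \<omega>)^2)}"

definition L2norm :: "'w measure \<Rightarrow> ('w \<Rightarrow> real) \<Rightarrow> real" where
  "L2norm M z = sqrt (LINT \<omega>|M. (z \<omega>)^2)"

definition pos_part :: "('w \<Rightarrow> real) \<Rightarrow> ('w \<Rightarrow> real)" where
  "pos_part z = (\<lambda>\<omega>. max (z \<omega>) 0)"

definition dense_embedding :: "'w measure \<Rightarrow> ('y::real_normed_vector \<Rightarrow> 'w \<Rightarrow> real) \<Rightarrow> bool" where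
  "dense_embedding M e \<longleftrightarrow>
     (\<forall>a b y1 y2. e (a *\<^sub>R y1 + b *\<^sub>R y2) = (\<lambda>\<omega>. a * e y1 \<omega> + b * e y2 \<omega>)) \<and>
     (\<forall>y. e y \<in> L2 M) \<and>
     (\<exists>C. \<forall>y. L2norm M (e y) \<le> C * norm y) \<and>
     (\<forall>y. (AE \<omega> in M. e y \<omega> = 0) \<longrightarrow> y = 0) \<and>
     (\<forall>z\<in>L2 M. \<forall>\<epsilon>>0. \<exists>y. L2norm M (\<lambda>\<omega>. e y \<omega> - z \<omega>) < \<epsilon>)"

definition gplus :: "('y \<Rightarrow> 'w \<Rightarrow> real) \<Rightarrow> ('x \<Rightarrow> 'y) \<Rightarrow> 'x \<Rightarrow> 'w \<Rightarrow> real" where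
  "gplus e g x = pos_part (e (g x))"

definition aug_lagr :: "'w measure \<Rightarrow> ('y \<Rightarrow> 'w \<Rightarrow> real) \<Rightarrow> ('x \<Rightarrow> real) \<Rightarrow> ('x \<Rightarrow> 'y)
    \<Rightarrow> real \<Rightarrow> 'x \<Rightarrow> ('w \<Rightarrow> real) \<Rightarrow> real" where
  "aug_lagr M e f g \<rho> x l = f x + \<rho> / 2 * (L2norm M (pos_part (\<lambda>\<omega>. e (g x) \<omega> + l \<omega> / \<rho>)))^2"

definition weak_conv :: "(nat \<Rightarrow> 'a::real_normed_vector) \<Rightarrow> 'a \<Rightarrow> bool" where
  "weak_conv s x \<longleftrightarrow> (\<forall>\<phi>::'a \<Rightarrow> real. bounded_linear \<phi> \<longrightarrow> (\<lambda>k. \<phi> (s k)) \<longlonglongrightarrow> \<phi> x)"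

definition weakly_lsc :: "('a::real_normed_vector \<Rightarrow> real) \<Rightarrow> bool" where
  "weakly_lsc F \<longleftrightarrow> (\<forall>s x. weak_conv s x \<longrightarrow> ereal (F x) \<le> liminf (\<lambda>k. ereal (F (s k))))"

definition weak_limit_point :: "(nat \<Rightarrow> 'a::real_normed_vector) \<Rightarrow> 'a \<Rightarrow> bool" where
  "weak_limit_point s x \<longleftrightarrow> (\<exists>r. strict_mono r \<and> weak_conv (s \<circ> r) x)"

end

theory Submission
  imports Defs
begin

text \<open>Either the penalty parameter eventually stays constant or it tends to infinity.
  In the first case the test in (S.3) makes the complementarity residual
  ||min{-g(x^{k+1}), w^k/rho_k}|| decay geometrically. This residual dominates
  ||g_+(x^{k+1})||, and by Cauchy-Schwarz it also bounds how far f(x^{k+1}) can exceed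
  the value at any feasible point.
  In the second case, compare L_rho_k(x^{k+1}, w^k) with L_rho_k(y, w^k) and divide by rho_k.
  The bounded multipliers w^k contribute only O(1/rho_k), so ||g_+(x^{k+1})|| is
  asymptotically at most ||g_+(y)||, and f(x^{k+1}) <= f(y) + O(1/rho_k) + eps_k for
  feasible y. Weak lower semicontinuity carries both bounds over to the weak limit point.\<close>

section \<open>Square-integrable functions\<close>

lemma L2_dominated:
  assumes "u \<in> borel_measurable M" "a \<in> L2 M" "b \<in> L2 M"
    and "\<And>\<omega>. (u \<omega>)^2 \<le> c * ((a \<omega>)^2 + (b \<omega>)^2)"
  shows "u \<in> L2 M"
proof -
  have "integrable M (\<lambda>\<omega>. c * ((a \<omega>)^2 + (b \<omega>)^2))"
    using assms(2,3) by (auto simp: L2_def)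
  then have "integrable M (\<lambda>\<omega>. (u \<omega>)^2)"
    by (rule Bochner_Integration.integrable_bound)
      (use assms(1,4) in \<open>auto intro: order_trans[OF _ abs_ge_self]\<close>)
  with assms(1) show ?thesis by (simp add: L2_def)
qed

lemma L2_integrable_power2: "u \<in> L2 M \<Longrightarrow> integrable M (\<lambda>\<omega>. (u \<omega>)^2)"
  by (simp add: L2_def)

lemma L2_add:
  assumes "u \<in> L2 M" "v \<in> L2 M"
  shows "(\<lambda>\<omega>. u \<omega> + v \<omega>) \<in> L2 M"
proof (rule L2_dominated[OF _ assms, where c=2])
  show "(\<lambda>\<omega>. u \<omega> + v \<omega>) \<in> borel_measurable M"
    using assms by (auto simp: L2_def)
  show "(u \<omega> + v \<omega>)^2 \<le> 2 * ((u \<omega>)^2 + (v \<omega>)^2)" for \<omega>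
    using sum_squares_bound[of "u \<omega>" "v \<omega>"] by (simp add: power2_sum)
qed

lemma L2_cmult: "u \<in> L2 M \<Longrightarrow> (\<lambda>\<omega>. c * u \<omega>) \<in> L2 M"
  by (rule L2_dominated[where c="c^2"]) (auto simp: L2_def power_mult_distrib)

lemma L2_divide: "u \<in> L2 M \<Longrightarrow> (\<lambda>\<omega>. u \<omega> / c) \<in> L2 M"
  using L2_cmult[of u M "1 / c"] by simp

lemma L2_minus: "u \<in> L2 M \<Longrightarrow> (\<lambda>\<omega>. - u \<omega>) \<in> L2 M"
  using L2_cmult[of u M "-1"] by simp

lemma L2_min:
  assumes "u \<in> L2 M" "v \<in> L2 M"
  shows "(\<lambda>\<omega>. min (u \<omega>) (v \<omega>)) \<in> L2 M"
  by (rule L2_dominated[OF _ assms, where c=1]) (use assms in \<open>auto simp: L2_def min_def\<close>)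

lemma L2_pos_part: "u \<in> L2 M \<Longrightarrow> pos_part u \<in> L2 M"
  by (rule L2_dominated[where c=1 and b=u]) (auto simp: L2_def pos_part_def max_def)

lemma L2_integrable_mult:
  assumes "u \<in> L2 M" "v \<in> L2 M"
  shows "integrable M (\<lambda>\<omega>. u \<omega> * v \<omega>)"
proof (rule Bochner_Integration.integrable_bound)
  show "integrable M (\<lambda>\<omega>. (u \<omega>)^2 + (v \<omega>)^2)"
    using assms by (auto simp: L2_def)
  show "(\<lambda>\<omega>. u \<omega> * v \<omega>) \<in> borel_measurable M"
    using assms by (auto simp: L2_def)
  have "\<bar>u \<omega> * v \<omega>\<bar> \<le> (u \<omega>)^2 + (v \<omega>)^2" for \<omega>
  proof -
    have "2 * (\<bar>u \<omega>\<bar> * \<bar>v \<omega>\<bar>) \<le> (u \<omega>)^2 + (v \<omega>)^2"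
      using sum_squares_bound[of "\<bar>u \<omega>\<bar>" "\<bar>v \<omega>\<bar>"] by (simp add: mult.assoc)
    moreover have "0 \<le> \<bar>u \<omega>\<bar> * \<bar>v \<omega>\<bar>" by simp
    ultimately show ?thesis unfolding abs_mult by linarith
  qed
  then show "AE \<omega> in M. norm (u \<omega> * v \<omega>) \<le> norm ((u \<omega>)^2 + (v \<omega>)^2)"
    by simp
qed

lemma L2norm_nonneg: "0 \<le> L2norm M u"
  by (simp add: L2norm_def)

lemma power2_L2norm: "(L2norm M u)^2 = (LINT \<omega>|M. (u \<omega>)^2)"
  by (simp add: L2norm_def)

lemma L2norm_mono_AE:
  assumes "v \<in> L2 M" "AE \<omega> in M. \<bar>u \<omega>\<bar> \<le> \<bar>v \<omega>\<bar>"
  shows "L2norm M u \<le> L2norm M v"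
  unfolding L2norm_def
  by (rule real_sqrt_le_mono, rule integral_mono_AE')
    (use assms in \<open>auto simp: L2_def abs_le_square_iff\<close>)

lemma L2norm_cmult: "L2norm M (\<lambda>\<omega>. c * u \<omega>) = \<bar>c\<bar> * L2norm M u"
  by (simp add: L2norm_def power_mult_distrib real_sqrt_mult)

lemma L2norm_divide: "L2norm M (\<lambda>\<omega>. u \<omega> / c) = L2norm M u / \<bar>c\<bar>"
  using L2norm_cmult[of M "inverse c" u] by (simp add: divide_inverse abs_inverse mult.commute)

lemma L2norm_eq_0_imp_AE:
  assumes "u \<in> L2 M" "L2norm M u = 0"
  shows "AE \<omega> in M. u \<omega> = 0"
  using assms integral_nonneg_eq_0_iff_AE[OF L2_integrable_power2[OF assms(1)]]
  by (simp add: L2norm_def)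

lemma L2_Cauchy_Schwarz:
  assumes u: "u \<in> L2 M" and v: "v \<in> L2 M"
  shows "(LINT \<omega>|M. u \<omega> * v \<omega>) \<le> L2norm M u * L2norm M v"
proof (cases "L2norm M u = 0 \<or> L2norm M v = 0")
  case True
  then have "AE \<omega> in M. u \<omega> * v \<omega> = 0"
    using L2norm_eq_0_imp_AE[OF u] L2norm_eq_0_imp_AE[OF v] by auto
  then show ?thesis
    by (simp add: integral_eq_zero_AE L2norm_nonneg)
next
  case False
  define t where "t = L2norm M v / L2norm M u"
  have t: "t > 0" using False L2norm_nonneg[of M u] L2norm_nonneg[of M v] by (simp add: t_def)
  have "2 * (u \<omega> * v \<omega>) \<le> t * (u \<omega>)^2 + (v \<omega>)^2 / t" for \<omega>
  proof -
    have "0 \<le> (t * u \<omega> - v \<omega>)^2 / t" using t by simp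
    then show ?thesis using t by (simp add: power2_diff field_simps power2_eq_square)
  qed
  then have "(LINT \<omega>|M. 2 * (u \<omega> * v \<omega>)) \<le> (LINT \<omega>|M. t * (u \<omega>)^2 + (v \<omega>)^2 / t)"
    using L2_integrable_mult[OF u v] L2_integrable_power2[OF u] L2_integrable_power2[OF v]
    by (intro integral_mono) auto
  also have "\<dots> = t * (L2norm M u)^2 + (L2norm M v)^2 / t"
    using u v by (simp add: power2_L2norm L2_integrable_power2)
  also have "\<dots> = 2 * (L2norm M u * L2norm M v)"
    using False by (simp add: t_def power2_eq_square)
  finally show ?thesis by simp
qed

lemma power2_L2norm_add:
  assumes "u \<in> L2 M" "v \<in> L2 M"
  shows "(L2norm M (\<lambda>\<omega>. u \<omega> + v \<omega>))^2
    = (L2norm M u)^2 + 2 * (LINT \<omega>|M. u \<omega> * v \<omega>) + (L2norm M v)^2"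
proof -
  have "(\<lambda>\<omega>. (u \<omega> + v \<omega>)^2) = (\<lambda>\<omega>. (u \<omega>)^2 + 2 * (u \<omega> * v \<omega>) + (v \<omega>)^2)"
    by (simp add: power2_eq_square algebra_simps)
  then show ?thesis
    using assms by (simp add: power2_L2norm L2_integrable_power2 L2_integrable_mult)
qed

lemma power2_L2norm_diff:
  assumes "u \<in> L2 M" "v \<in> L2 M"
  shows "(L2norm M (\<lambda>\<omega>. u \<omega> - v \<omega>))^2
    = (L2norm M u)^2 - 2 * (LINT \<omega>|M. u \<omega> * v \<omega>) + (L2norm M v)^2"
proof -
  have "(\<lambda>\<omega>. (u \<omega> - v \<omega>)^2) = (\<lambda>\<omega>. (u \<omega>)^2 - 2 * (u \<omega> * v \<omega>) + (v \<omega>)^2)"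
    by (simp add: power2_eq_square algebra_simps)
  then show ?thesis
    using assms by (simp add: power2_L2norm L2_integrable_power2 L2_integrable_mult)
qed

lemma L2norm_pos_part_le_shift:
  assumes "z \<in> L2 M" "u \<in> L2 M" "AE \<omega> in M. 0 \<le> u \<omega>"
  shows "L2norm M (pos_part z) \<le> L2norm M (pos_part (\<lambda>\<omega>. z \<omega> + u \<omega>))"
  by (rule L2norm_mono_AE[OF L2_pos_part[OF L2_add[OF assms(1,2)]]])
    (use assms(3) in \<open>auto simp: pos_part_def\<close>)

lemma power2_L2norm_pos_part_shift_le:
  assumes z: "z \<in> L2 M" and v: "v \<in> L2 M" and u: "AE \<omega> in M. 0 \<le> u \<omega> \<and> u \<omega> \<le> v \<omega>"
  shows "(L2norm M (pos_part (\<lambda>\<omega>. z \<omega> + u \<omega>)))^2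
    \<le> (L2norm M (pos_part z))^2 + 2 * (LINT \<omega>|M. pos_part z \<omega> * v \<omega>) + (L2norm M v)^2"
proof -
  have "L2norm M (pos_part (\<lambda>\<omega>. z \<omega> + u \<omega>)) \<le> L2norm M (\<lambda>\<omega>. pos_part z \<omega> + v \<omega>)"
    by (rule L2norm_mono_AE[OF L2_add[OF L2_pos_part[OF z] v]]) (use u in \<open>auto simp: pos_part_def\<close>)
  then have "(L2norm M (pos_part (\<lambda>\<omega>. z \<omega> + u \<omega>)))^2 \<le> (L2norm M (\<lambda>\<omega>. pos_part z \<omega> + v \<omega>))^2"
    by (rule power_mono[OF _ L2norm_nonneg])
  then show ?thesis
    using power2_L2norm_add[OF L2_pos_part[OF z] v] by simp
qed

lemma L2norm_pos_part_shift_le_of_nonpos: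
  assumes "u \<in> L2 M" "AE \<omega> in M. z \<omega> \<le> 0" "AE \<omega> in M. 0 \<le> u \<omega>"
  shows "L2norm M (pos_part (\<lambda>\<omega>. z \<omega> + u \<omega>)) \<le> L2norm M u"
  by (rule L2norm_mono_AE) (use assms in \<open>auto simp: pos_part_def\<close>)

lemma L2norm_pos_part_le_min:
  assumes "u \<in> L2 M" "z \<in> L2 M" "AE \<omega> in M. 0 \<le> u \<omega>"
  shows "L2norm M (pos_part z) \<le> L2norm M (\<lambda>\<omega>. min (- z \<omega>) (u \<omega>))"
  by (rule L2norm_mono_AE[OF L2_min[OF L2_minus[OF assms(2)] assms(1)]])
    (use assms(3) in \<open>auto simp: pos_part_def\<close>)

lemma power2_L2norm_le_pos_part_shift:
  assumes z: "z \<in> L2 M" and u: "u \<in> L2 M"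
  shows "(L2norm M u)^2
    \<le> (L2norm M (pos_part (\<lambda>\<omega>. z \<omega> + u \<omega>)))^2 + 2 * L2norm M u * L2norm M (\<lambda>\<omega>. min (- z \<omega>) (u \<omega>))"
proof -
  define V where "V = (\<lambda>\<omega>. min (- z \<omega>) (u \<omega>))"
  have V: "V \<in> L2 M" unfolding V_def by (intro L2_min L2_minus z u)
  have "pos_part (\<lambda>\<omega>. z \<omega> + u \<omega>) = (\<lambda>\<omega>. u \<omega> - V \<omega>)"
    by (auto simp: pos_part_def V_def max_def min_def)
  then have "(L2norm M (pos_part (\<lambda>\<omega>. z \<omega> + u \<omega>)))^2
      = (L2norm M u)^2 - 2 * (LINT \<omega>|M. u \<omega> * V \<omega>) + (L2norm M V)^2"
    using power2_L2norm_diff[OF u V] by simp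
  moreover have "(LINT \<omega>|M. u \<omega> * V \<omega>) \<le> L2norm M u * L2norm M V"
    by (rule L2_Cauchy_Schwarz[OF u V])
  ultimately show ?thesis
    unfolding V_def[symmetric] using zero_le_power2[of "L2norm M V"]
    by (simp only: mult.assoc)
qed

section \<open>Weak lower semicontinuity along weak limit points\<close>

lemma weakly_lsc_le_of_tendsto:
  assumes "weakly_lsc F" "weak_conv s x" "\<forall>\<^sub>F k in sequentially. F (s k) \<le> u k" "u \<longlonglongrightarrow> c"
  shows "F x \<le> c"
proof -
  have "ereal (F x) \<le> liminf (\<lambda>k. ereal (F (s k)))"
    using assms(1,2) by (simp add: weakly_lsc_def)
  also have "\<dots> \<le> liminf (\<lambda>k. ereal (u k))"
    by (rule Liminf_mono) (use assms(3) in auto)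
  also have "\<dots> = ereal c"
    by (rule lim_imp_Liminf) (simp_all add: assms(4))
  finally show ?thesis by simp
qed

lemma weakly_lsc_eventually_gt:
  assumes "weakly_lsc F" "weak_conv s x" "c < F x"
  shows "\<forall>\<^sub>F k in sequentially. c < F (s k)"
proof -
  have "ereal c < ereal (F x)"
    using assms(3) by simp
  also have "\<dots> \<le> liminf (\<lambda>k. ereal (F (s k)))"
    using assms(1,2) by (simp add: weakly_lsc_def)
  finally have "ereal c < liminf (\<lambda>k. ereal (F (s k)))" .
  then show ?thesis
    using less_LiminfD by fastforce
qed

lemma weak_limit_point_Suc:
  assumes "weak_limit_point s x"
  shows "weak_limit_point (\<lambda>k. s (Suc k)) x"
proof -
  obtain r where r: "strict_mono r" "weak_conv (s \<circ> r) x"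
    using assms by (auto simp: weak_limit_point_def)
  define r' where "r' k = r (Suc k) - 1" for k
  have Suc_r': "Suc (r' k) = r (Suc k)" for k
  proof -
    have "r 0 < r (Suc k)"
      using r(1) by (simp add: strict_mono_less)
    then show ?thesis by (simp add: r'_def)
  qed
  have "strict_mono r'"
    using r(1) Suc_r' by (intro strict_monoI_Suc) (metis Suc_less_eq lessI strict_monoD)
  moreover have "weak_conv (\<lambda>k. s (r (Suc k))) x"
    using r(2) by (auto simp: weak_conv_def intro: LIMSEQ_Suc)
  ultimately show ?thesis
    unfolding weak_limit_point_def by (auto simp: o_def Suc_r')
qed

lemma weak_limit_point_lsc_le_on_superlevel:
  assumes "weakly_lsc F" "weakly_lsc H" "weak_limit_point s x" "b < H x"
    and "\<And>k. b < H (s k) \<Longrightarrow> F (s k) \<le> u k" "u \<longlonglongrightarrow> c"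
  shows "F x \<le> c"
proof -
  obtain r where r: "strict_mono r" "weak_conv (s \<circ> r) x"
    using assms(3) by (auto simp: weak_limit_point_def)
  have "\<forall>\<^sub>F j in sequentially. b < H ((s \<circ> r) j)"
    by (rule weakly_lsc_eventually_gt[OF assms(2) r(2) assms(4)])
  then have "\<forall>\<^sub>F j in sequentially. F ((s \<circ> r) j) \<le> (u \<circ> r) j"
    by eventually_elim (simp add: assms(5))
  then show ?thesis
    by (rule weakly_lsc_le_of_tendsto[OF assms(1) r(2) _ LIMSEQ_subseq_LIMSEQ[OF assms(6) r(1)]])
qed

lemma weak_limit_point_lsc_le:
  assumes "weakly_lsc F" "weak_limit_point s x" "\<And>k. F (s k) \<le> u k" "u \<longlonglongrightarrow> c"
  shows "F x \<le> c"
  by (rule weak_limit_point_lsc_le_on_superlevel[OF assms(1,1,2), of "F x - 1"]) (use assms(3,4) in auto)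

section \<open>Iterates of the augmented Lagrangian method\<close>

lemma eventually_stationary_or_filterlim_at_top:
  fixes \<rho> :: "nat \<Rightarrow> real"
  assumes pos: "\<And>k. 0 < \<rho> k" and "1 < \<gamma>"
    and step: "\<And>k. \<rho> (Suc k) = \<rho> k \<or> \<rho> (Suc k) = \<gamma> * \<rho> k"
  shows "(\<forall>\<^sub>F k in sequentially. \<rho> (Suc k) = \<rho> k) \<or> filterlim \<rho> at_top sequentially"
proof -
  have "\<rho> k \<le> \<gamma> * \<rho> k" for k
    using pos[of k] \<open>1 < \<gamma>\<close> by simp
  then have inc: "incseq \<rho>"
    using step by (intro incseq_SucI) (metis order_refl)
  show ?thesis
  proof (cases "\<exists>B. \<forall>k. \<rho> k \<le> B")
    case True
    then obtain L where "\<rho> \<longlonglongrightarrow> L"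
      using inc incseq_convergent by blast
    then have "(\<lambda>k. \<rho> (Suc k) - \<rho> k) \<longlonglongrightarrow> L - L"
      by (intro tendsto_diff LIMSEQ_Suc)
    moreover have "0 < (\<gamma> - 1) * \<rho> 0"
      using pos[of 0] \<open>1 < \<gamma>\<close> by simp
    ultimately have "\<forall>\<^sub>F k in sequentially. \<rho> (Suc k) - \<rho> k < (\<gamma> - 1) * \<rho> 0"
      by (simp add: order_tendstoD(2))
    then have "\<forall>\<^sub>F k in sequentially. \<rho> (Suc k) = \<rho> k"
    proof eventually_elim
      case (elim k)
      have "(\<gamma> - 1) * \<rho> 0 \<le> (\<gamma> - 1) * \<rho> k"
        using inc \<open>1 < \<gamma>\<close> by (simp add: incseq_def)
      then show ?case
        using elim step[of k] by (auto simp: algebra_simps)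
    qed
    then show ?thesis ..
  next
    case False
    have "\<forall>\<^sub>F k in sequentially. Z \<le> \<rho> k" for Z
    proof -
      obtain K where "Z < \<rho> K"
        using False by (meson not_le)
      then show ?thesis
        using inc by (auto simp: eventually_sequentially incseq_def intro: order_trans[OF less_imp_le])
    qed
    then show ?thesis
      by (simp add: filterlim_at_top)
  qed
qed

lemma tendsto_zero_of_eventually_contracting:
  fixes a :: "nat \<Rightarrow> real"
  assumes "\<And>k. 0 \<le> a k" "\<tau> < 1" "\<forall>\<^sub>F k in sequentially. a (Suc k) \<le> \<tau> * a k"
  shows "a \<longlonglongrightarrow> 0"
proof -
  obtain N where "\<And>k. N \<le> k \<Longrightarrow> a (Suc k) \<le> \<tau> * a k"
    using assms(3) by (auto simp: eventually_sequentially)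
  then have "summable a"
    using assms(1,2) by (intro summable_ratio_test[of \<tau> N]) auto
  then show ?thesis
    by (rule summable_LIMSEQ_zero)
qed

locale auglag_run =
  fixes M :: "'w measure"
    and e :: "'y \<Rightarrow> 'w \<Rightarrow> real"
    and f :: "'x::real_normed_vector \<Rightarrow> real"
    and g :: "'x \<Rightarrow> 'y"
    and x :: "nat \<Rightarrow> 'x"
    and w :: "nat \<Rightarrow> 'w \<Rightarrow> real"
    and wmax :: "'w \<Rightarrow> real"
    and \<rho> \<epsilon> :: "nat \<Rightarrow> real"
    and \<gamma> \<tau> :: real
  assumes e_L2: "\<And>y. e y \<in> L2 M"
    and wmax_L2: "wmax \<in> L2 M"
    and w_L2: "\<And>k. w k \<in> L2 M"
    and w_bnd: "\<And>k. AE \<omega> in M. 0 \<le> w k \<omega> \<and> w k \<omega> \<le> wmax \<omega>"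
    and rho0: "0 < \<rho> 0"
    and gamma: "1 < \<gamma>"
    and tau: "\<tau> < 1"
    and eps_lim: "\<epsilon> \<longlonglongrightarrow> 0"
    and x_approx: "\<And>k y. aug_lagr M e f g (\<rho> k) (x (Suc k)) (w k)
                          \<le> aug_lagr M e f g (\<rho> k) y (w k) + \<epsilon> k"
    and rho_upd: "\<And>k. \<rho> (Suc k) =
         (if k = 0 \<or>
             L2norm M (\<lambda>\<omega>. min (- e (g (x (Suc k))) \<omega>) (w k \<omega> / \<rho> k))
               \<le> \<tau> * L2norm M (\<lambda>\<omega>. min (- e (g (x k)) \<omega>) (w (k - 1) \<omega> / \<rho> (k - 1)))
          then \<rho> k else \<gamma> * \<rho> k)"
begin

lemma rho_cases: "\<rho> (Suc k) = \<rho> k \<or> \<rho> (Suc k) = \<gamma> * \<rho> k"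
  using rho_upd[of k] by presburger

lemma rho_pos: "0 < \<rho> k"
proof (induction k)
  case 0
  show ?case by (rule rho0)
next
  case (Suc k)
  then show ?case
    using rho_cases[of k] gamma by auto
qed

lemma shift_L2: "(\<lambda>\<omega>. w k \<omega> / \<rho> k) \<in> L2 M"
  by (rule L2_divide[OF w_L2])

lemma shift_nonneg: "AE \<omega> in M. 0 \<le> w k \<omega> / \<rho> k"
  using w_bnd[of k] by eventually_elim (use rho_pos[of k] in auto)

lemma shift_le: "AE \<omega> in M. 0 \<le> w k \<omega> / \<rho> k \<and> w k \<omega> / \<rho> k \<le> wmax \<omega> / \<rho> k"
  using w_bnd[of k] by eventually_elim (use rho_pos[of k] in \<open>auto intro: divide_right_mono\<close>)

lemma L2norm_shift_le: "\<rho> k * L2norm M (\<lambda>\<omega>. w k \<omega> / \<rho> k) \<le> L2norm M wmax"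
proof -
  have "L2norm M (w k) \<le> L2norm M wmax"
    by (rule L2norm_mono_AE[OF wmax_L2]) (use w_bnd[of k] in auto)
  then show ?thesis
    using rho_pos[of k] by (simp add: L2norm_divide)
qed

definition residual :: "nat \<Rightarrow> real" where
  "residual k = L2norm M (\<lambda>\<omega>. min (- e (g (x (Suc k))) \<omega>) (w k \<omega> / \<rho> k))"

lemma residual_nonneg: "0 \<le> residual k"
  by (simp add: residual_def L2norm_nonneg)

lemma residual_contracts:
  assumes "\<rho> (Suc (Suc k)) = \<rho> (Suc k)"
  shows "residual (Suc k) \<le> \<tau> * residual k"
proof (rule ccontr)
  assume "\<not> residual (Suc k) \<le> \<tau> * residual k"
  then have "\<rho> (Suc (Suc k)) = \<gamma> * \<rho> (Suc k)"
    using rho_upd[of "Suc k"] by (simp add: residual_def)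
  then show False
    using assms gamma rho_pos[of "Suc k"] by simp
qed

lemma residual_tendsto_zero:
  assumes "\<forall>\<^sub>F k in sequentially. \<rho> (Suc k) = \<rho> k"
  shows "residual \<longlonglongrightarrow> 0"
proof (rule tendsto_zero_of_eventually_contracting[OF residual_nonneg tau])
  show "\<forall>\<^sub>F k in sequentially. residual (Suc k) \<le> \<tau> * residual k"
  proof -
    have "\<forall>\<^sub>F k in sequentially. \<rho> (Suc (Suc k)) = \<rho> (Suc k)"
      using eventually_sequentially_Suc[of "\<lambda>k. \<rho> (Suc k) = \<rho> k"] assms by blast
    then show ?thesis
      by eventually_elim (rule residual_contracts)
  qed
qed

lemma gplus_le_residual: "L2norm M (gplus e g (x (Suc k))) \<le> residual k"
  unfolding gplus_def residual_def
  by (rule L2norm_pos_part_le_min[OF shift_L2 e_L2 shift_nonneg])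

lemma objective_le_residual:
  assumes "AE \<omega> in M. e (g y) \<omega> \<le> 0"
  shows "f (x (Suc k)) \<le> f y + L2norm M wmax * residual k + \<epsilon> k"
proof -
  let ?U = "L2norm M (\<lambda>\<omega>. w k \<omega> / \<rho> k)"
  let ?P = "L2norm M (pos_part (\<lambda>\<omega>. e (g y) \<omega> + w k \<omega> / \<rho> k))"
  let ?Q = "L2norm M (pos_part (\<lambda>\<omega>. e (g (x (Suc k))) \<omega> + w k \<omega> / \<rho> k))"
  have "?P \<le> ?U"
    by (rule L2norm_pos_part_shift_le_of_nonpos[OF shift_L2 assms shift_nonneg])
  then have "?P^2 \<le> ?U^2"
    by (rule power_mono[OF _ L2norm_nonneg])
  also have "?U^2 \<le> ?Q^2 + 2 * ?U * residual k"
    unfolding residual_def by (rule power2_L2norm_le_pos_part_shift[OF e_L2 shift_L2])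
  finally have "\<rho> k / 2 * (?P^2 - ?Q^2) \<le> \<rho> k / 2 * (2 * ?U * residual k)"
    using rho_pos[of k] by (intro mult_left_mono) auto
  also have "\<dots> = (\<rho> k * ?U) * residual k"
    by simp
  also have "\<dots> \<le> L2norm M wmax * residual k"
    by (rule mult_right_mono[OF L2norm_shift_le residual_nonneg])
  finally show ?thesis
    using x_approx[of k y] by (simp add: aug_lagr_def right_diff_distrib)
qed

lemma objective_le_penalty:
  assumes "AE \<omega> in M. e (g y) \<omega> \<le> 0"
  shows "f (x (Suc k)) \<le> f y + (L2norm M wmax)^2 / (2 * \<rho> k) + \<epsilon> k"
proof -
  let ?U = "L2norm M (\<lambda>\<omega>. w k \<omega> / \<rho> k)"
  let ?P = "L2norm M (pos_part (\<lambda>\<omega>. e (g y) \<omega> + w k \<omega> / \<rho> k))"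
  have "\<rho> k * ?P \<le> \<rho> k * ?U"
    using L2norm_pos_part_shift_le_of_nonpos[OF shift_L2 assms shift_nonneg] rho_pos[of k]
    by simp
  also have "\<dots> \<le> L2norm M wmax"
    by (rule L2norm_shift_le)
  finally have "(\<rho> k * ?P)^2 \<le> (L2norm M wmax)^2"
    using rho_pos[of k] by (intro power_mono) (auto simp: L2norm_nonneg)
  then have "(\<rho> k * ?P)^2 / (2 * \<rho> k) \<le> (L2norm M wmax)^2 / (2 * \<rho> k)"
    using rho_pos[of k] by (intro divide_right_mono) auto
  moreover have "(\<rho> k * ?P)^2 / (2 * \<rho> k) = \<rho> k / 2 * ?P^2"
    using rho_pos[of k] by (simp add: power2_eq_square)
  moreover have "0 \<le> \<rho> k / 2 * (L2norm M (pos_part (\<lambda>\<omega>. e (g (x (Suc k))) \<omega> + w k \<omega> / \<rho> k)))^2"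
    using rho_pos[of k] by simp
  ultimately show ?thesis
    using x_approx[of k y] unfolding aug_lagr_def by linarith
qed

lemma infeasibility_le_penalty:
  assumes "b \<le> f (x (Suc k))"
  shows "(L2norm M (gplus e g (x (Suc k))))^2
    \<le> (L2norm M (gplus e g y))^2
      + 2 * (f y - b + \<epsilon> k + (LINT \<omega>|M. gplus e g y \<omega> * wmax \<omega>)) / \<rho> k
      + (L2norm M wmax / \<rho> k)^2"
proof -
  let ?P = "L2norm M (pos_part (\<lambda>\<omega>. e (g y) \<omega> + w k \<omega> / \<rho> k))"
  let ?Q = "L2norm M (pos_part (\<lambda>\<omega>. e (g (x (Suc k))) \<omega> + w k \<omega> / \<rho> k))"
  let ?D = "f y - b + \<epsilon> k"
  let ?C = "LINT \<omega>|M. gplus e g y \<omega> * wmax \<omega>"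
  have "L2norm M (gplus e g (x (Suc k))) \<le> ?Q"
    unfolding gplus_def by (rule L2norm_pos_part_le_shift[OF e_L2 shift_L2 shift_nonneg])
  then have Q: "(L2norm M (gplus e g (x (Suc k))))^2 \<le> ?Q^2"
    by (rule power_mono[OF _ L2norm_nonneg])
  have P: "?P^2 \<le> (L2norm M (gplus e g y))^2 + 2 * ?C / \<rho> k + (L2norm M wmax / \<rho> k)^2"
    using power2_L2norm_pos_part_shift_le[OF e_L2[of "g y"] L2_divide[OF wmax_L2] shift_le[of k]] rho_pos[of k]
    by (simp add: gplus_def L2norm_divide)
  have "\<rho> k / 2 * ?Q^2 \<le> \<rho> k / 2 * ?P^2 + ?D"
    using x_approx[of k y] assms unfolding aug_lagr_def by linarith
  also have "\<dots> = \<rho> k / 2 * (?P^2 + 2 * ?D / \<rho> k)"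
    using rho_pos[of k] by (simp add: field_simps)
  finally have "?Q^2 \<le> ?P^2 + 2 * ?D / \<rho> k"
    using rho_pos[of k] by (simp add: mult_le_cancel_left_pos)
  moreover have "2 * (?D + ?C) / \<rho> k = 2 * ?D / \<rho> k + 2 * ?C / \<rho> k"
    by (simp add: add_divide_distrib distrib_left)
  ultimately show ?thesis
    using P Q by linarith
qed

lemma rho_stationary_or_tendsto_top:
  "(\<forall>\<^sub>F k in sequentially. \<rho> (Suc k) = \<rho> k) \<or> filterlim \<rho> at_top sequentially"
  by (rule eventually_stationary_or_filterlim_at_top[of \<rho> \<gamma>, OF rho_pos gamma rho_cases])

lemma limit_point_minimizes_infeasibility:
  assumes f_lsc: "weakly_lsc f" and g_lsc: "weakly_lsc (\<lambda>z. L2norm M (gplus e g z))"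
    and lp: "weak_limit_point x xbar"
  shows "L2norm M (gplus e g xbar) \<le> L2norm M (gplus e g y)"
proof -
  let ?G = "\<lambda>z. L2norm M (gplus e g z)"
  have lp': "weak_limit_point (\<lambda>k. x (Suc k)) xbar"
    by (rule weak_limit_point_Suc[OF lp])
  consider "\<forall>\<^sub>F k in sequentially. \<rho> (Suc k) = \<rho> k" | "filterlim \<rho> at_top sequentially"
    using rho_stationary_or_tendsto_top by blast
  then show ?thesis
  proof cases
    case 1
    have "?G xbar \<le> 0"
      by (rule weak_limit_point_lsc_le[OF g_lsc lp' gplus_le_residual residual_tendsto_zero[OF 1]])
    then show ?thesis
      using L2norm_nonneg order_trans by blast
  next
    case 2
    \<comment> \<open>Lower semicontinuity of f keeps f(x^{k+1}) bounded below along the subsequence,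
      so the objective cannot absorb the growing penalty term.\<close>
    define b where "b = f xbar - 1"
    define C where "C = (LINT \<omega>|M. gplus e g y \<omega> * wmax \<omega>)"
    define bound where "bound k = sqrt ((?G y)^2 + 2 * (f y - b + \<epsilon> k + C) / \<rho> k
      + (L2norm M wmax / \<rho> k)^2)" for k
    have inf: "filterlim \<rho> at_infinity sequentially"
      by (rule filterlim_at_top_imp_at_infinity[OF 2])
    have "(\<lambda>k. 2 * (f y - b + \<epsilon> k + C)) \<longlonglongrightarrow> 2 * (f y - b + 0 + C)"
      by (intro tendsto_intros eps_lim)
    then have "bound \<longlonglongrightarrow> sqrt ((?G y)^2 + 0 + 0^2)"
      unfolding bound_def
      by (intro tendsto_intros tendsto_divide_0[OF _ inf] tendsto_divide_0[OF tendsto_const inf])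
    then have "bound \<longlonglongrightarrow> ?G y"
      by (simp add: L2norm_nonneg)
    moreover have "?G (x (Suc k)) \<le> bound k" if "b < f (x (Suc k))" for k
      unfolding bound_def C_def
      using that infeasibility_le_penalty[of b k y] by (intro real_le_rsqrt) simp
    ultimately show ?thesis
      by (intro weak_limit_point_lsc_le_on_superlevel[OF g_lsc f_lsc lp', of b]) (simp_all add: b_def)
  qed
qed

lemma limit_point_minimizes_objective:
  assumes f_lsc: "weakly_lsc f" and lp: "weak_limit_point x xbar"
    and feasible: "AE \<omega> in M. e (g y) \<omega> \<le> 0"
  shows "f xbar \<le> f y"
proof -
  have lp': "weak_limit_point (\<lambda>k. x (Suc k)) xbar"
    by (rule weak_limit_point_Suc[OF lp])
  consider "\<forall>\<^sub>F k in sequentially. \<rho> (Suc k) = \<rho> k" | "filterlim \<rho> at_top sequentially"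
    using rho_stationary_or_tendsto_top by blast
  then show ?thesis
  proof cases
    case 1
    have "(\<lambda>k. f y + L2norm M wmax * residual k + \<epsilon> k) \<longlonglongrightarrow> f y + L2norm M wmax * 0 + 0"
      by (intro tendsto_intros residual_tendsto_zero[OF 1] eps_lim)
    then show ?thesis
      by (intro weak_limit_point_lsc_le[OF f_lsc lp' objective_le_residual[OF feasible]]) simp
  next
    case 2
    have inf: "filterlim (\<lambda>k. 2 * \<rho> k) at_infinity sequentially"
      using 2 by (intro filterlim_at_top_imp_at_infinity filterlim_tendsto_pos_mult_at_top[OF tendsto_const]) auto
    have "(\<lambda>k. f y + (L2norm M wmax)^2 / (2 * \<rho> k) + \<epsilon> k) \<longlonglongrightarrow> f y + 0 + 0"
      by (intro tendsto_intros tendsto_divide_0[OF tendsto_const inf] eps_lim)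
    then show ?thesis
      by (intro weak_limit_point_lsc_le[OF f_lsc lp' objective_le_penalty[OF feasible]]) simp
  qed
qed

end

theorem theorem4p2:
  fixes M :: "'w measure"
    and e :: "'y::banach \<Rightarrow> 'w \<Rightarrow> real"
    and f :: "'x::banach \<Rightarrow> real"
    and g :: "'x \<Rightarrow> 'y"
    and x :: "nat \<Rightarrow> 'x"
    and lam w :: "nat \<Rightarrow> 'w \<Rightarrow> real"
    and wmax :: "'w \<Rightarrow> real"
    and \<rho> \<epsilon> :: "nat \<Rightarrow> real"
    and \<gamma> \<tau> :: real
    and xbar :: 'x
  assumes emb: "dense_embedding M e"
    and f_lsc: "weakly_lsc f"
    and g_lsc: "weakly_lsc (\<lambda>x. L2norm M (gplus e g x))"
    and lam0: "lam 0 \<in> L2 M"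
    and rho0: "\<rho> 0 > 0"
    and wmax: "wmax \<in> L2 M" "AE \<omega> in M. wmax \<omega> \<ge> 0"
    and gamma: "\<gamma> > 1"
    and tau: "0 < \<tau>" "\<tau> < 1"
    and w_L2: "\<And>k. w k \<in> L2 M"
    and w_bnd: "\<And>k. AE \<omega> in M. 0 \<le> w k \<omega> \<and> w k \<omega> \<le> wmax \<omega>"
    and eps_dec: "decseq \<epsilon>"
    and eps_lim: "\<epsilon> \<longlonglongrightarrow> 0"
    and x_approx: "\<And>k y. aug_lagr M e f g (\<rho> k) (x (Suc k)) (w k)
                          \<le> aug_lagr M e f g (\<rho> k) y (w k) + \<epsilon> k"
    and lam_upd: "\<And>k. lam (Suc k) = pos_part (\<lambda>\<omega>. w k \<omega> + \<rho> k * e (g (x (Suc k))) \<omega>)"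
    and rho_upd: "\<And>k. \<rho> (Suc k) =
         (if k = 0 \<or>
             L2norm M (\<lambda>\<omega>. min (- e (g (x (Suc k))) \<omega>) (w k \<omega> / \<rho> k))
               \<le> \<tau> * L2norm M (\<lambda>\<omega>. min (- e (g (x k)) \<omega>) (w (k - 1) \<omega> / \<rho> (k - 1)))
          then \<rho> k else \<gamma> * \<rho> k)"
    and wlp: "weak_limit_point x xbar"
  shows "(\<forall>y. (L2norm M (gplus e g xbar))^2 \<le> (L2norm M (gplus e g y))^2)
       \<and> ((AE \<omega> in M. e (g xbar) \<omega> \<le> 0) \<longrightarrow>
            (\<forall>y. (AE \<omega> in M. e (g y) \<omega> \<le> 0) \<longrightarrow> f xbar \<le> f y))"
proof -
  interpret auglag_run M e f g x w wmax \<rho> \<epsilon> \<gamma> \<tau>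
  proof
    show "e y \<in> L2 M" for y
      using emb by (simp add: dense_embedding_def)
  qed (fact wmax(1) w_L2 w_bnd rho0 gamma tau(2) eps_lim x_approx rho_upd)+
  have "(L2norm M (gplus e g xbar))^2 \<le> (L2norm M (gplus e g y))^2" for y
    using limit_point_minimizes_infeasibility[OF f_lsc g_lsc wlp]
    by (rule power_mono[OF _ L2norm_nonneg])
  moreover have "f xbar \<le> f y" if "AE \<omega> in M. e (g y) \<omega> \<le> 0" for y
    by (rule limit_point_minimizes_objective[OF f_lsc wlp that])
  ultimately show ?thesis
    by blast
qed

end
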